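(* Let $K>0$, let $m_1,m_2\in(0,1]$, and let $f,g:[0,K]\to\mathbb{R}$ be such that $f$ is $m_1$-convex and $g$ is $m_2$-convex on $[0,K]$. Let $0\le a<b\le K$ with $a/m_1\le K$ and $a/m_2\le K$, and assume $f$, $g$ and $fg$ are integrable on $[a,b]$. Then \begin{align*} &\frac{g(b)}{(b-a)^2}\int_a^b (x-a)f(x)\,dx+m_2\frac{g(a/m_2)}{(b-a)^2}\int_a^b (b-x)f(x)\,dx\\ &\quad+\frac{f(b)}{(b-a)^2}\int_a^b (x-a)g(x)\,dx+m_1\frac{f(a/m_1)}{(b-a)^2}\int_a^b (b-x)g(x)\,dx\\ &\le \frac{1}{b-a}\int_a^b f(x)g(x)\,dx+\frac13 f(b)g(b)+\frac{m_1}{6}f\!\left(\frac{a}{m_1}\right)g(b)+\frac{m_2}{6}f(b)\,g\!\left(\frac{a}{m_2}\right)+\frac{m_1m_2}{3}f\!\left(\frac{a}{m_1}\right)g\!\left(\frac{a}{m_2}\right). \end{align*}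
   Context: For $m\in[0,1]$ and $K>0$, a function $h:[0,K]\to\mathbb{R}$ is called $m$-convex if $h(tx+m(1-t)y)\le t\,h(x)+m(1-t)\,h(y)$ for all $x,y\in[0,K]$ and $t\in[0,1]$. *)

theory Defs
  imports "HOL-Analysis.Analysis"
begin

definition m_convex_on :: "real \<Rightarrow> real \<Rightarrow> (real \<Rightarrow> real) \<Rightarrow> bool" where
  "m_convex_on m K h \<longleftrightarrow>
     (\<forall>x\<in>{0..K}. \<forall>y\<in>{0..K}. \<forall>t\<in>{0..1}.
        h (t * x + m * (1 - t) * y) \<le> t * h x + m * (1 - t) * h y)"

end

theory Submission
  imports Defs
begin

text \<open>
  On [a,b] an m-convex function h lies below the chord joining
  (a, m h(a/m)) and (b, h b): every x in [a,b] is t b + m (1-t) (a/m) with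
  t = (x-a)/(b-a).  So f \<le> F and g \<le> G on [a,b] with F, G affine, hence
  (F - f)(G - g) \<ge> 0, i.e. F g + G f \<le> f g + F G pointwise.  Integrating over
  [a,b]: the integrals of F g and G f are combinations of the moments
  \<integral>(x-a) h and \<integral>(b-x) h of f and g, and \<integral> F G is an explicit quadratic in the
  chord values.  Dividing by (b-a) gives the theorem.
\<close>

definition chord :: "real \<Rightarrow> real \<Rightarrow> real \<Rightarrow> real \<Rightarrow> real \<Rightarrow> real" where
  "chord a b p q x = (q * (x - a) + p * (b - x)) / (b - a)"

lemma continuous_on_chord [continuous_intros]: "continuous_on S (chord a b p q)"
  unfolding chord_def divide_inverse by (intro continuous_intros)

lemma m_convex_below_chord:
  assumes conv: "m_convex_on m K h" and m: "m \<in> {0<..1}"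
    and "0 \<le> a" "a < b" "b \<le> K" "a / m \<le> K" and x: "x \<in> {a..b}"
  shows "h x \<le> chord a b (m * h (a / m)) (h b) x"
proof -
  define t where "t = (x - a) / (b - a)"
  have t: "t \<in> {0..1}" using x assms by (auto simp: t_def field_simps)
  have ends: "b \<in> {0..K}" "a / m \<in> {0..K}" using assms by auto
  have point: "t * b + m * (1 - t) * (a / m) = x"
  proof -
    have "m * (1 - t) * (a / m) = (1 - t) * a" using m by simp
    moreover have "t * (b - a) = x - a" using \<open>a < b\<close> by (simp add: t_def)
    ultimately show ?thesis by (simp add: algebra_simps)
  qed
  have "h (t * b + m * (1 - t) * (a / m)) \<le> t * h b + m * (1 - t) * h (a / m)"
    using conv t ends unfolding m_convex_on_def by blast
  also have "\<dots> = chord a b (m * h (a / m)) (h b) x"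
  proof -
    have "1 - t = (b - x) / (b - a)" using \<open>a < b\<close> by (simp add: t_def field_simps)
    then show ?thesis by (simp add: chord_def t_def divide_inverse algebra_simps)
  qed
  finally show ?thesis using point by simp
qed

lemma absolutely_integrable_if_bounded_above:
  fixes h u :: "'a::euclidean_space \<Rightarrow> real"
  assumes h: "h integrable_on S" and u: "u absolutely_integrable_on S"
    and le: "\<And>x. x \<in> S \<Longrightarrow> h x \<le> u x"
  shows "h absolutely_integrable_on S"
proof -
  have "(\<lambda>x. u x - h x) integrable_on S"
    using integrable_diff[OF set_lebesgue_integral_eq_integral(1)[OF u] h] .
  then have diff: "(\<lambda>x. u x - h x) absolutely_integrable_on S"
    using le by (intro nonnegative_absolutely_integrable_1) auto
  have "(\<lambda>x. u x - (u x - h x)) absolutely_integrable_on S"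
    using set_integral_diff(1)[OF u diff] .
  then show ?thesis by simp
qed

lemma continuous_mult_integrable:
  fixes c h :: "real \<Rightarrow> real"
  assumes c: "continuous_on {a..b} c" and h: "h absolutely_integrable_on {a..b}"
  shows "(\<lambda>x. c x * h x) integrable_on {a..b}"
proof -
  have "c \<in> borel_measurable (lebesgue_on {a..b})"
    using c by (intro continuous_imp_measurable_on_sets_lebesgue) auto
  moreover have "bounded (c ` {a..b})"
    using c by (intro compact_imp_bounded compact_continuous_image) auto
  ultimately have "(\<lambda>x. c x * h x) absolutely_integrable_on {a..b}"
    using h by (intro absolutely_integrable_bounded_measurable_product_real) auto
  then show ?thesis using set_lebesgue_integral_eq_integral(1) by blast
qed

lemma chord_mult_has_integral:
  fixes h :: "real \<Rightarrow> real"
  assumes "h absolutely_integrable_on {a..b}"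
  shows "((\<lambda>x. chord a b p q x * h x) has_integral
           q / (b - a) * integral {a..b} (\<lambda>x. (x - a) * h x)
         + p / (b - a) * integral {a..b} (\<lambda>x. (b - x) * h x)) {a..b}"
proof -
  have "(\<lambda>x. (x - a) * h x) integrable_on {a..b}" "(\<lambda>x. (b - x) * h x) integrable_on {a..b}"
    using assms by (auto intro!: continuous_mult_integrable continuous_intros)
  then have "((\<lambda>x. q / (b - a) * ((x - a) * h x) + p / (b - a) * ((b - x) * h x)) has_integral
           q / (b - a) * integral {a..b} (\<lambda>x. (x - a) * h x)
         + p / (b - a) * integral {a..b} (\<lambda>x. (b - x) * h x)) {a..b}"
    by (intro has_integral_add has_integral_mult_right integrable_integral)
  moreover have "chord a b p q x * h x = q / (b - a) * ((x - a) * h x) + p / (b - a) * ((b - x) * h x)"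
    for x by (simp add: chord_def divide_inverse algebra_simps)
  ultimately show ?thesis by simp
qed

lemma chord_product_has_integral:
  assumes "a < b"
  shows "((\<lambda>x. chord a b p q x * chord a b r s x) has_integral
           (b - a) * (q * s / 3 + p * r / 3 + (q * r + p * s) / 6)) {a..b}"
proof -
  define L where "L = b - a"
  have L: "L \<noteq> 0" using assms by (simp add: L_def)
  define c where "c = inverse (L^2)"
  define P where "P x = c * (q * s * (x - a)^3 / 3 - p * r * (b - x)^3 / 3
      + (q * r + p * s) * (L * (x - a)^2 / 2 - (x - a)^3 / 3))" for x
  have deriv: "(P has_real_derivative chord a b p q x * chord a b r s x) (at x within {a..b})" for x
  proof (rule DERIV_cong)
    show "(P has_real_derivative c * (q * s * (x - a)^2 + p * r * (b - x)^2
        + (q * r + p * s) * (L * (x - a) - (x - a)^2))) (at x within {a..b})"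
      unfolding P_def[abs_def]
      by (auto intro!: derivative_eq_intros simp: field_simps eval_nat_numeral)
    have "q * s * (x - a)^2 + p * r * (b - x)^2 + (q * r + p * s) * (L * (x - a) - (x - a)^2)
        = (q * (x - a) + p * (b - x)) * (s * (x - a) + r * (b - x))"
      by (simp add: L_def power2_eq_square algebra_simps)
    moreover have "chord a b p q x * chord a b r s x
        = (q * (x - a) + p * (b - x)) * (s * (x - a) + r * (b - x)) / L^2"
      by (simp add: chord_def L_def power2_eq_square)
    ultimately show "c * (q * s * (x - a)^2 + p * r * (b - x)^2
        + (q * r + p * s) * (L * (x - a) - (x - a)^2)) = chord a b p q x * chord a b r s x"
      by (simp add: c_def divide_inverse mult.commute)
  qed
  have "P b - P a = L * (q * s / 3 + p * r / 3 + (q * r + p * s) / 6)"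
    unfolding P_def c_def using L by (simp add: L_def[symmetric] field_simps power2_eq_square power3_eq_cube)
  moreover have "((\<lambda>x. chord a b p q x * chord a b r s x) has_integral P b - P a) {a..b}"
    using assms deriv
    by (intro fundamental_theorem_of_calculus) (auto simp: has_real_derivative_iff_has_vector_derivative)
  ultimately show ?thesis by (simp add: L_def)
qed

lemma mixed_product_integral_le:
  fixes f g F G :: "'a::euclidean_space \<Rightarrow> real"
  assumes "\<And>x. x \<in> S \<Longrightarrow> f x \<le> F x" "\<And>x. x \<in> S \<Longrightarrow> g x \<le> G x"
    and "((\<lambda>x. F x * g x + G x * f x) has_integral I) S"
    and "((\<lambda>x. f x * g x + F x * G x) has_integral J) S"
  shows "I \<le> J"
proof (rule has_integral_le[OF assms(3,4)])
  fix x assume x: "x \<in> S"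
  have "0 \<le> (F x - f x) * (G x - g x)" using assms(1,2)[OF x] by simp
  then show "F x * g x + G x * f x \<le> f x * g x + F x * G x" by (simp add: algebra_simps)
qed

lemma integral_below_chords_le:
  fixes f g :: "real \<Rightarrow> real"
  assumes "a < b"
    and f_le: "\<And>x. x \<in> {a..b} \<Longrightarrow> f x \<le> chord a b p q x"
    and g_le: "\<And>x. x \<in> {a..b} \<Longrightarrow> g x \<le> chord a b r s x"
    and f: "f integrable_on {a..b}" and g: "g integrable_on {a..b}"
    and fg: "(\<lambda>x. f x * g x) integrable_on {a..b}"
  shows "(q * integral {a..b} (\<lambda>x. (x - a) * g x) + p * integral {a..b} (\<lambda>x. (b - x) * g x)
        + s * integral {a..b} (\<lambda>x. (x - a) * f x) + r * integral {a..b} (\<lambda>x. (b - x) * f x)) / (b - a)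
       \<le> integral {a..b} (\<lambda>x. f x * g x)
        + (b - a) * (q * s / 3 + p * r / 3 + (q * r + p * s) / 6)"
proof -
  have chord_abs: "chord a b u v absolutely_integrable_on {a..b}" for u v
    by (intro absolutely_integrable_continuous_real continuous_on_chord)
  have f_abs: "f absolutely_integrable_on {a..b}"
    using absolutely_integrable_if_bounded_above[OF f chord_abs f_le] .
  have g_abs: "g absolutely_integrable_on {a..b}"
    using absolutely_integrable_if_bounded_above[OF g chord_abs g_le] .
  have mixed: "((\<lambda>x. chord a b p q x * g x + chord a b r s x * f x) has_integral
      q / (b - a) * integral {a..b} (\<lambda>x. (x - a) * g x)
      + p / (b - a) * integral {a..b} (\<lambda>x. (b - x) * g x)
      + (s / (b - a) * integral {a..b} (\<lambda>x. (x - a) * f x)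
      + r / (b - a) * integral {a..b} (\<lambda>x. (b - x) * f x))) {a..b}"
    by (intro has_integral_add chord_mult_has_integral f_abs g_abs)
  have products: "((\<lambda>x. f x * g x + chord a b p q x * chord a b r s x) has_integral
      integral {a..b} (\<lambda>x. f x * g x)
      + (b - a) * (q * s / 3 + p * r / 3 + (q * r + p * s) / 6)) {a..b}"
    using assms(1) fg by (intro has_integral_add integrable_integral chord_product_has_integral)
  show ?thesis
    using mixed_product_integral_le[OF f_le g_le mixed products] by (simp add: add_divide_distrib)
qed

theorem theorem4:
  fixes f g :: "real \<Rightarrow> real" and K m1 m2 a b :: real
  assumes "K > 0"
    and "m1 \<in> {0<..1}" and "m2 \<in> {0<..1}"
    and "m_convex_on m1 K f" and "m_convex_on m2 K g"
    and "0 \<le> a" and "a < b" and "b \<le> K"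
    and "a / m1 \<le> K" and "a / m2 \<le> K"
    and "f integrable_on {a..b}" and "g integrable_on {a..b}"
    and "(\<lambda>x. f x * g x) integrable_on {a..b}"
  shows "g b / (b - a)^2 * integral {a..b} (\<lambda>x. (x - a) * f x)
         + m2 * g (a / m2) / (b - a)^2 * integral {a..b} (\<lambda>x. (b - x) * f x)
         + f b / (b - a)^2 * integral {a..b} (\<lambda>x. (x - a) * g x)
         + m1 * f (a / m1) / (b - a)^2 * integral {a..b} (\<lambda>x. (b - x) * g x)
       \<le> 1 / (b - a) * integral {a..b} (\<lambda>x. f x * g x)
         + 1/3 * f b * g b
         + m1 / 6 * f (a / m1) * g b
         + m2 / 6 * f b * g (a / m2)
         + m1 * m2 / 3 * f (a / m1) * g (a / m2)"
proof -
  define L where "L = b - a"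
  have "L > 0" using assms(7) by (simp add: L_def)
  define Ig1 Ig2 If1 If2 Ifg where
    "Ig1 = integral {a..b} (\<lambda>x. (x - a) * g x)" and "Ig2 = integral {a..b} (\<lambda>x. (b - x) * g x)"
    and "If1 = integral {a..b} (\<lambda>x. (x - a) * f x)" and "If2 = integral {a..b} (\<lambda>x. (b - x) * f x)"
    and "Ifg = integral {a..b} (\<lambda>x. f x * g x)"
  define Q where "Q = f b * g b / 3 + m1 * f (a / m1) * (m2 * g (a / m2)) / 3
      + (f b * (m2 * g (a / m2)) + m1 * f (a / m1) * g b) / 6"
  have "(f b * Ig1 + m1 * f (a / m1) * Ig2 + g b * If1 + m2 * g (a / m2) * If2) / L \<le> Ifg + L * Q"
    unfolding Ig1_def Ig2_def If1_def If2_def Ifg_def L_def Q_def using assms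
    by (intro integral_below_chords_le m_convex_below_chord) auto
  then have "(f b * Ig1 + m1 * f (a / m1) * Ig2 + g b * If1 + m2 * g (a / m2) * If2) / L / L
      \<le> (Ifg + L * Q) / L"
    using \<open>L > 0\<close> by (intro divide_right_mono) auto
  moreover have "(Ifg + L * Q) / L = 1 / L * Ifg + 1/3 * f b * g b + m1 / 6 * f (a / m1) * g b
      + m2 / 6 * f b * g (a / m2) + m1 * m2 / 3 * f (a / m1) * g (a / m2)"
    using \<open>L > 0\<close> by (simp add: Q_def field_simps)
  moreover have "(f b * Ig1 + m1 * f (a / m1) * Ig2 + g b * If1 + m2 * g (a / m2) * If2) / L / L
      = g b / L^2 * If1 + m2 * g (a / m2) / L^2 * If2 + f b / L^2 * Ig1 + m1 * f (a / m1) / L^2 * Ig2"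
    by (simp add: power2_eq_square add_divide_distrib)
  ultimately show ?thesis
    unfolding Ig1_def Ig2_def If1_def If2_def Ifg_def L_def by simp
qed

end
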